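(* Let $X$ be a finite q-cycle set and $x\in X$. Let $C_x:=\bigcup_{n}\mathcal{C}_n$, where $\mathcal{C}_0:=\{x\}$ and $\mathcal{C}_n:=\mathcal{C}_{n-1}\cup\{\sigma_a(b):a,b\in\mathcal{C}_{n-1}\}\cup\{\delta_a(b):a,b\in\mathcal{C}_{n-1}\}$ for $n\ge1$. Then $C_x$ is an indecomposable q-cycle set.
   Context: A q-cycle set is a non-empty set $X$ with operations $\cdot,:$ such that each $\sigma_x:y\mapsto x\cdot y$ is bijective and $(x\cdot y)\cdot(x\cdot z)=(y:x)\cdot(y\cdot z)$, $(x:y):(x:z)=(y\cdot x):(y:z)$, $(x\cdot y):(x\cdot z)=(y:x)\cdot(y:z)$ for all $x,y,z$; $\delta_x(y):=x:y$. A sub-q-cycle set is a subset that is a q-cycle set under the restricted operations. A q-cycle set is indecomposable if it admits no partition into two nonempty sub-q-cycle sets (for finite ones, equivalently the group generated by all $\sigma_y,\delta_y$ acts transitively). *)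

theory Defs
  imports Main
begin

text \<open>A q-cycle set on carrier X with operations dot (x\<cdot>y = \<sigma>_x y) and col (x:y = \<delta>_x y).
  The operations are total functions on the ambient type; the structure is their
  restriction to X, so we require X to be closed under both.\<close>
definition q_cycle_set :: "'a set \<Rightarrow> ('a \<Rightarrow> 'a \<Rightarrow> 'a) \<Rightarrow> ('a \<Rightarrow> 'a \<Rightarrow> 'a) \<Rightarrow> bool" where
  "q_cycle_set X dot col \<longleftrightarrow>
     X \<noteq> {} \<and>
     (\<forall>x\<in>X. \<forall>y\<in>X. dot x y \<in> X \<and> col x y \<in> X) \<and>
     (\<forall>x\<in>X. bij_betw (dot x) X X) \<and>
     (\<forall>x\<in>X. \<forall>y\<in>X. \<forall>z\<in>X.
        dot (dot x y) (dot x z) = dot (col y x) (dot y z) \<and>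
        col (col x y) (col x z) = col (dot y x) (col y z) \<and>
        col (dot x y) (dot x z) = dot (col y x) (col y z))"

definition sub_q_cycle_set :: "'a set \<Rightarrow> 'a set \<Rightarrow> ('a \<Rightarrow> 'a \<Rightarrow> 'a) \<Rightarrow> ('a \<Rightarrow> 'a \<Rightarrow> 'a) \<Rightarrow> bool" where
  "sub_q_cycle_set Y X dot col \<longleftrightarrow> Y \<subseteq> X \<and> q_cycle_set Y dot col"

definition indecomposable_q_cycle_set :: "'a set \<Rightarrow> ('a \<Rightarrow> 'a \<Rightarrow> 'a) \<Rightarrow> ('a \<Rightarrow> 'a \<Rightarrow> 'a) \<Rightarrow> bool" where
  "indecomposable_q_cycle_set X dot col \<longleftrightarrow>
     q_cycle_set X dot col \<and>
     \<not> (\<exists>A B. A \<noteq> {} \<and> B \<noteq> {} \<and> A \<inter> B = {} \<and> A \<union> B = X \<and>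
            sub_q_cycle_set A X dot col \<and> sub_q_cycle_set B X dot col)"

fun Cgen :: "('a \<Rightarrow> 'a \<Rightarrow> 'a) \<Rightarrow> ('a \<Rightarrow> 'a \<Rightarrow> 'a) \<Rightarrow> 'a \<Rightarrow> nat \<Rightarrow> 'a set" where
  "Cgen dot col x 0 = {x}"
| "Cgen dot col x (Suc n) = Cgen dot col x n
     \<union> {dot a b | a b. a \<in> Cgen dot col x n \<and> b \<in> Cgen dot col x n}
     \<union> {col a b | a b. a \<in> Cgen dot col x n \<and> b \<in> Cgen dot col x n}"

definition Cx :: "('a \<Rightarrow> 'a \<Rightarrow> 'a) \<Rightarrow> ('a \<Rightarrow> 'a \<Rightarrow> 'a) \<Rightarrow> 'a \<Rightarrow> 'a set" where
  "Cx dot col x = (\<Union>n. Cgen dot col x n)"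

end

theory Submission
  imports Defs
begin

text \<open>\<open>C\<^sub>x\<close> is the smallest subset of \<open>X\<close> containing \<open>x\<close> and closed under both operations.
  Being a finite closed subset of a q-cycle set, it inherits the identities, and each \<open>\<sigma>\<^sub>a\<close>,
  injective on \<open>X\<close>, maps it injectively and hence bijectively to itself. In any partition of
  \<open>C\<^sub>x\<close> into two sub-q-cycle sets, the part containing \<open>x\<close> is closed, so by minimality it is
  all of \<open>C\<^sub>x\<close>.\<close>

definition closed_under :: "'a set \<Rightarrow> ('a \<Rightarrow> 'a \<Rightarrow> 'a) \<Rightarrow> ('a \<Rightarrow> 'a \<Rightarrow> 'a) \<Rightarrow> bool" where
  "closed_under Y dot col \<longleftrightarrow> (\<forall>a\<in>Y. \<forall>b\<in>Y. dot a b \<in> Y \<and> col a b \<in> Y)"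

lemma q_cycle_set_closed_under: "q_cycle_set X dot col \<Longrightarrow> closed_under X dot col"
  unfolding q_cycle_set_def closed_under_def by blast

lemma closed_under_if_sub_q_cycle_set: "sub_q_cycle_set Y X dot col \<Longrightarrow> closed_under Y dot col"
  unfolding sub_q_cycle_set_def by (blast intro: q_cycle_set_closed_under)

lemma q_cycle_set_finite_closed_subset:
  assumes X: "q_cycle_set X dot col"
    and Y: "finite Y" "Y \<noteq> {}" "Y \<subseteq> X" "closed_under Y dot col"
  shows "q_cycle_set Y dot col"
proof -
  have "bij_betw (dot a) Y Y" if a: "a \<in> Y" for a
  proof -
    have "inj_on (dot a) X"
      using X a \<open>Y \<subseteq> X\<close> unfolding q_cycle_set_def bij_betw_def by blast
    then have inj: "inj_on (dot a) Y"
      using \<open>Y \<subseteq> X\<close> by (rule inj_on_subset)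
    moreover have "dot a ` Y \<subseteq> Y"
      using a \<open>closed_under Y dot col\<close> unfolding closed_under_def by blast
    ultimately have "dot a ` Y = Y"
      using endo_inj_surj[OF \<open>finite Y\<close>] by blast
    with inj show ?thesis
      unfolding bij_betw_def by blast
  qed
  moreover have "\<forall>a\<in>Y. \<forall>b\<in>Y. \<forall>c\<in>Y.
      dot (dot a b) (dot a c) = dot (col b a) (dot b c) \<and>
      col (col a b) (col a c) = col (dot b a) (col b c) \<and>
      col (dot a b) (dot a c) = dot (col b a) (col b c)"
    using X \<open>Y \<subseteq> X\<close> unfolding q_cycle_set_def by blast
  ultimately show ?thesis
    using Y unfolding q_cycle_set_def closed_under_def by blast
qed

lemma indecomposable_if_generated:
  assumes "q_cycle_set Y dot col" "x \<in> Y"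
    and generated: "\<And>A. A \<subseteq> Y \<Longrightarrow> x \<in> A \<Longrightarrow> closed_under A dot col \<Longrightarrow> A = Y"
  shows "indecomposable_q_cycle_set Y dot col"
proof -
  have whole: "P = Y" if "x \<in> P" and sub: "sub_q_cycle_set P Y dot col" for P
    using generated[OF _ that(1) closed_under_if_sub_q_cycle_set[OF sub]] sub
    unfolding sub_q_cycle_set_def by blast
  have False
    if "A \<noteq> {}" "B \<noteq> {}" "A \<inter> B = {}" "A \<union> B = Y"
      and "sub_q_cycle_set A Y dot col" "sub_q_cycle_set B Y dot col" for A B
  proof -
    from that(4) \<open>x \<in> Y\<close> have "x \<in> A \<or> x \<in> B" by blast
    then have "A = Y \<or> B = Y"
      using whole[OF _ that(5)] whole[OF _ that(6)] by blast
    with that(1-4) show False by blast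
  qed
  with \<open>q_cycle_set Y dot col\<close> show ?thesis
    unfolding indecomposable_q_cycle_set_def by blast
qed

lemma Cgen_mono: "n \<le> m \<Longrightarrow> Cgen dot col x n \<subseteq> Cgen dot col x m"
  by (induction m rule: dec_induct) auto

lemma self_in_Cx: "x \<in> Cx dot col x"
  unfolding Cx_def by (rule UN_I[of 0]) simp_all

lemma closed_under_Cx: "closed_under (Cx dot col x) dot col"
  unfolding closed_under_def
proof (intro ballI)
  fix a b assume "a \<in> Cx dot col x" "b \<in> Cx dot col x"
  then obtain n m where "a \<in> Cgen dot col x n" "b \<in> Cgen dot col x m"
    unfolding Cx_def by blast
  then have "a \<in> Cgen dot col x (max n m)" "b \<in> Cgen dot col x (max n m)"
    using Cgen_mono[of n "max n m" dot col x] Cgen_mono[of m "max n m" dot col x] by auto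
  then have "dot a b \<in> Cgen dot col x (Suc (max n m)) \<and> col a b \<in> Cgen dot col x (Suc (max n m))"
    by auto
  then show "dot a b \<in> Cx dot col x \<and> col a b \<in> Cx dot col x"
    unfolding Cx_def by blast
qed

lemma Cx_least:
  assumes "x \<in> A" "closed_under A dot col"
  shows "Cx dot col x \<subseteq> A"
proof -
  have "Cgen dot col x n \<subseteq> A" for n
    using assms unfolding closed_under_def by (induction n) auto
  then show ?thesis
    unfolding Cx_def by blast
qed

theorem mainTheorem11:
  fixes X :: "'a set" and dot col :: "'a \<Rightarrow> 'a \<Rightarrow> 'a" and x :: 'a
  assumes "finite X" and "q_cycle_set X dot col" and "x \<in> X"
  shows "indecomposable_q_cycle_set (Cx dot col x) dot col"
proof -
  let ?C = "Cx dot col x"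
  have "?C \<subseteq> X"
    using assms(3) q_cycle_set_closed_under[OF assms(2)] by (rule Cx_least)
  moreover have "finite ?C"
    using \<open>?C \<subseteq> X\<close> assms(1) by (rule finite_subset)
  ultimately have "q_cycle_set ?C dot col"
    using self_in_Cx[of x dot col] closed_under_Cx
    by (intro q_cycle_set_finite_closed_subset[OF assms(2)]) auto
  then show ?thesis
  proof (rule indecomposable_if_generated[OF _ self_in_Cx])
    show "A = ?C" if "A \<subseteq> ?C" "x \<in> A" "closed_under A dot col" for A
      using that(1) Cx_least[OF that(2,3)] by (rule subset_antisym)
  qed
qed

end
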